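(* Let $0<q,r<\infty$ and let $u,v,w$ be weights on $(0,\infty)$. Let $\{x_k\}$ be the covering sequence associated with $u$ and $\mathcal Z$ its index set (as described in the context). Then $$\bigg( \int_0^{\infty} \bigg( \int_x^{\infty} \bigg( \int_t^{\infty} h \bigg)^q w(t)\,dt\bigg)^{r / q} u(x)\,dx \bigg)^{1/r} \approx \bigg\| \bigg\{ 2^{k / r} \bigg(\int_{x_k}^{x_{k+1}} \bigg( \int_s^{x_{k+1}} h \bigg)^q w(s)\,ds\bigg)^{ 1 / q} \bigg\} \bigg\|_{\ell^r(\mathcal Z)} + \bigg( \int_0^{\infty} u(t) \sup_{t < s} \bigg(\int_t^s w \bigg)^{r / q} \bigg( \int_s^{\infty} h\bigg)^r \,dt\bigg)^{1/r}$$ with constants independent of $h\in\mathfrak M^+(0,\infty)$.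
   Context: $\mathfrak M^+(0,\infty)$: non-negative measurable functions on $(0,\infty)$. A weight is $v\in\mathfrak M^+(0,\infty)$ with $0<\int_0^x v<\infty$ for all $x>0$. Covering sequence: if $\int_0^\infty u=\infty$, $\{x_k\}_{k\in\mathbb Z}$ is the strictly increasing sequence with $\int_0^{x_k}u=2^k$, and $\mathcal Z=\mathbb Z$. If $\int_0^\infty u<\infty$, let $M\in\mathbb Z$ satisfy $2^M\le\int_0^\infty u<2^{M+1}$, let $\int_0^{x_k}u=2^k$ for $k\le M$, $x_{M+1}=\infty$, and $\mathcal Z=\{k\in\mathbb Z: k\le M\}$. For a sequence $\{a_k\}_{k\in\mathcal Z}$, $\|\{a_k\}\|_{\ell^r(\mathcal Z)}=(\sum_{k\in\mathcal Z}|a_k|^r)^{1/r}$. $A\approx B$ means two-sided inequality with constants depending only on $q,r$. *)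

theory Defs
  imports "HOL-Analysis.Analysis"
begin

definition enn_powr :: "ennreal \<Rightarrow> real \<Rightarrow> ennreal" (infixr "powe" 80) where
  "x powe p = (if x = top then (if 0 < p then top else if p = 0 then 1 else 0)
               else ennreal (enn2real x powr p))"

definition is_weight :: "(real \<Rightarrow> real) \<Rightarrow> bool" where
  "is_weight v \<longleftrightarrow> v \<in> borel_measurable borel \<and> (\<forall>t>0. 0 \<le> v t) \<and>
     (\<forall>x>0. 0 < (\<integral>\<^sup>+ t\<in>{0<..<x}. ennreal (v t) \<partial>lborel) \<and>
            (\<integral>\<^sup>+ t\<in>{0<..<x}. ennreal (v t) \<partial>lborel) < top)"

definition nonneg_meas :: "(real \<Rightarrow> real) \<Rightarrow> bool" where
  "nonneg_meas h \<longleftrightarrow> h \<in> borel_measurable borel \<and> (\<forall>t>0. 0 \<le> h t)"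

definition covering_seq :: "(real \<Rightarrow> real) \<Rightarrow> int set \<Rightarrow> (int \<Rightarrow> ereal) \<Rightarrow> bool" where
  "covering_seq u Z x \<longleftrightarrow>
     (\<forall>k\<in>Z. 0 < x k \<and> x k < \<infinity> \<and>
        (\<integral>\<^sup>+ t\<in>{t. 0 < t \<and> ereal t < x k}. ennreal (u t) \<partial>lborel) = ennreal (2 powi k)) \<and>
     (\<forall>j\<in>Z. \<forall>k\<in>Z. j < k \<longrightarrow> x j < x k) \<and>
     (if (\<integral>\<^sup>+ t\<in>{0<..}. ennreal (u t) \<partial>lborel) = top then Z = UNIV
      else (\<exists>M::int. ennreal (2 powi M) \<le> (\<integral>\<^sup>+ t\<in>{0<..}. ennreal (u t) \<partial>lborel) \<and>
              (\<integral>\<^sup>+ t\<in>{0<..}. ennreal (u t) \<partial>lborel) < ennreal (2 powi (M + 1)) \<and>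
              Z = {k. k \<le> M} \<and> x (M + 1) = \<infinity>))"

end

theory Submission
  imports Defs
begin

text \<open>Write L, B, S for the r-th powers of the three quantities, H(s) for the integral of h
  over (s, oo), F(y) for the integral of H^q w over (y, oo), and J_k = [x_k, x_(k+1)); the covering
  sequence gives u(J_(k-1)) = 2^(k-1) and u(J_k) <= 2^k.

  Lower bounds: restricting the w-integral in F(t) to (t, s) and using that H decreases shows that
  the supremum term is at most F(t)^(r/q), so S <= L. The k-th term of B is at most
  2^k F(x_k)^(r/q) = 2 * int_(J_(k-1)) F(x_k)^(r/q) u <= 2 * int_(J_(k-1)) F^(r/q) u, so B <= 2 L.

  Upper bound: on J_k, F <= F(x_k) <= sum_(j>=k) a_j with a_j = int_(J_j) H^q w, and a discrete
  Hardy inequality for the weights 2^k gives L <~ sum_j 2^j a_j^(r/q). On J_j, H splits into the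
  integral of h up to x_(j+1) and the tail H(x_(j+1)), so a_j <~ b_j + H(x_(j+1))^q w(J_j). The first
  part yields B. For the second, 2^j = 2 u(J_(j-1)), and for t in J_(j-1) the factor
  (H(x_(j+1))^q w(J_j))^(r/q) is one of the terms of the supremum at t (take s = x_(j+1)), so this
  part is at most 2 S.\<close>

lemma enn_powr_ennreal: "0 \<le> c \<Longrightarrow> ennreal c powe p = ennreal (c powr p)"
  by (simp add: enn_powr_def)

lemma enn_powr_numeral: "numeral n powe p = ennreal (numeral n powr p)"
  by (metis enn_powr_ennreal ennreal_numeral zero_le_numeral)

lemma enn_powr_zero [simp]: "0 < p \<Longrightarrow> 0 powe p = 0"
  by (simp add: enn_powr_def)

lemma enn_powr_mono: assumes "a \<le> b" "0 < p" shows "a powe p \<le> b powe p"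
proof (cases "b = top")
  case True then show ?thesis using assms by (simp add: enn_powr_def)
next
  case False
  then have "a \<noteq> top" using assms top_unique by auto
  then show ?thesis using False assms
    by (auto simp: enn_powr_def top.not_eq_extremum intro!: ennreal_leI powr_mono2 enn2real_mono)
qed

lemma enn_powr_one [simp]: "a powe 1 = a"
  by (cases a) (auto simp: enn_powr_def)

lemma enn_powr_max: "0 < p \<Longrightarrow> max a b powe p = max (a powe p) (b powe p)"
  by (metis max.absorb1 max.absorb2 nle_le enn_powr_mono)

lemma enn_powr_pos: "0 < p \<Longrightarrow> 0 < a \<Longrightarrow> 0 < a powe p"
  by (cases "a = top") (auto simp: enn_powr_def enn2real_eq_0_iff)

lemma enn_powr_mult: assumes "0 < p" shows "(a * b) powe p = a powe p * b powe p"
proof -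
  consider "a = 0" | "b = 0" | "a = top" "b \<noteq> 0" | "b = top" "a \<noteq> 0"
    | "a \<noteq> top" "b \<noteq> top" "a \<noteq> 0" "b \<noteq> 0"
    by blast
  then show ?thesis
  proof cases
    case 3 then have "0 < b powe p" using assms by (intro enn_powr_pos) (auto simp: zero_less_iff_neq_zero)
    then show ?thesis using 3 assms by (simp add: enn_powr_def ennreal_mult_top ennreal_top_mult)
  next
    case 4 then have "0 < a powe p" using assms by (intro enn_powr_pos) (auto simp: zero_less_iff_neq_zero)
    then show ?thesis using 4 assms by (simp add: enn_powr_def ennreal_mult_top ennreal_top_mult)
  next
    case 5 then show ?thesis using assms
      by (simp add: enn_powr_def ennreal_mult_eq_top_iff enn2real_mult powr_mult ennreal_mult'')
  qed (use assms in auto)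
qed

lemma enn_powr_powr: "0 < p \<Longrightarrow> 0 < s \<Longrightarrow> (a powe p) powe s = a powe (p * s)"
  by (cases "a = top") (auto simp: enn_powr_def powr_powr)

lemma enn_powr_add_le: assumes "0 < p" shows "(a + b) powe p \<le> 2 powe p * (a powe p + b powe p)"
proof -
  have "(a + b) powe p \<le> (2 * max a b) powe p"
    by (intro enn_powr_mono assms) (metis add_mono max.cobounded1 max.cobounded2 mult_2)
  also have "\<dots> = 2 powe p * max (a powe p) (b powe p)"
    using assms by (simp add: enn_powr_mult enn_powr_max)
  also have "\<dots> \<le> 2 powe p * (a powe p + b powe p)"
    by (intro mult_left_mono) (auto simp: max_def add_increasing add_increasing2)
  finally show ?thesis .
qed

lemma le_enn_powr_inverse: assumes "a powe p \<le> b" "0 < p" shows "a \<le> b powe (1/p)"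
proof -
  have "a = (a powe p) powe (1/p)" using enn_powr_powr[of p "1/p" a] assms by simp
  also have "\<dots> \<le> b powe (1/p)" using assms by (intro enn_powr_mono) auto
  finally show ?thesis .
qed

lemma borel_measurable_enn_powr [measurable]:
  "f \<in> borel_measurable M \<Longrightarrow> (\<lambda>x. f x powe p) \<in> borel_measurable M"
proof -
  define c where "c = (if 0 < p then top else if p = 0 then 1 else (0::ennreal))"
  have "(\<lambda>x. x powe p) = (\<lambda>x. if x = top then c else ennreal (enn2real x powr p))"
    by (simp add: enn_powr_def fun_eq_iff c_def)
  moreover have "(\<lambda>x. if x = top then c else ennreal (enn2real x powr p)) \<in> borel_measurable borel"
    by measurable
  ultimately show "f \<in> borel_measurable M \<Longrightarrow> (\<lambda>x. f x powe p) \<in> borel_measurable M"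
    using measurable_compose[of f M borel "\<lambda>x. x powe p"] by simp
qed

lemma borel_measurable_antimono_ennreal:
  fixes F :: "real \<Rightarrow> ennreal"
  assumes "\<And>a b. a \<le> b \<Longrightarrow> F b \<le> F a"
  shows "F \<in> borel_measurable borel"
proof (rule borel_measurableI_greater)
  fix y
  have "is_interval {x. y < F x}"
    unfolding is_interval_1 using assms by (auto intro: less_le_trans)
  then show "{x \<in> space borel. y < F x} \<in> sets borel"
    using real_interval_borel_measurable by simp
qed

lemma nn_integral_count_space_disjoint_le:
  fixes g :: "'i \<Rightarrow> 'a \<Rightarrow> ennreal"
  assumes "countable I" "\<And>i. i \<in> I \<Longrightarrow> g i \<in> borel_measurable M"
    and disj: "\<And>y i j. y \<in> space M \<Longrightarrow> i \<in> I \<Longrightarrow> j \<in> I \<Longrightarrow> i \<noteq> j \<Longrightarrow> g i y = 0 \<or> g j y = 0"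
    and le: "\<And>y i. y \<in> space M \<Longrightarrow> i \<in> I \<Longrightarrow> g i y \<le> f y"
  shows "(\<integral>\<^sup>+i. (\<integral>\<^sup>+y. g i y \<partial>M) \<partial>count_space I) \<le> (\<integral>\<^sup>+y. f y \<partial>M)"
proof -
  have "(\<integral>\<^sup>+i. (\<integral>\<^sup>+y. g i y \<partial>M) \<partial>count_space I) = (\<integral>\<^sup>+y. (\<integral>\<^sup>+i. g i y \<partial>count_space I) \<partial>M)"
    using assms by (subst nn_integral_count_space_nn_integral) auto
  also have "\<dots> \<le> (\<integral>\<^sup>+y. f y \<partial>M)"
  proof (rule nn_integral_mono)
    fix y assume y: "y \<in> space M"
    show "(\<integral>\<^sup>+i. g i y \<partial>count_space I) \<le> f y"
    proof (cases "\<exists>i0\<in>I. g i0 y \<noteq> 0")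
      case True
      then obtain i0 where i0: "i0 \<in> I" "g i0 y \<noteq> 0" by blast
      have "(\<integral>\<^sup>+i. g i y \<partial>count_space I) = (\<Sum>i\<in>{i0}. g i y)"
        using disj[OF y _ i0(1)] i0 by (intro nn_integral_count_space') auto
      then show ?thesis using le[OF y i0(1)] by simp
    next
      case False
      then have "(\<integral>\<^sup>+i. g i y \<partial>count_space I) = (\<integral>\<^sup>+i. 0 \<partial>count_space I)"
        by (intro nn_integral_cong) auto
      then show ?thesis by simp
    qed
  qed
  finally show ?thesis .
qed

lemma nn_integral_le_count_space_sum:
  fixes g :: "'i \<Rightarrow> 'a \<Rightarrow> ennreal"
  assumes "countable I" "\<And>i. i \<in> I \<Longrightarrow> g i \<in> borel_measurable M"
    and "\<And>y. y \<in> space M \<Longrightarrow> f y \<le> (\<integral>\<^sup>+i. g i y \<partial>count_space I)"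
  shows "(\<integral>\<^sup>+y. f y \<partial>M) \<le> (\<integral>\<^sup>+i. (\<integral>\<^sup>+y. g i y \<partial>M) \<partial>count_space I)"
proof -
  have "(\<integral>\<^sup>+y. f y \<partial>M) \<le> (\<integral>\<^sup>+y. (\<integral>\<^sup>+i. g i y \<partial>count_space I) \<partial>M)"
    using assms by (intro nn_integral_mono) auto
  also have "\<dots> = (\<integral>\<^sup>+i. (\<integral>\<^sup>+y. g i y \<partial>M) \<partial>count_space I)"
    using assms by (subst nn_integral_count_space_nn_integral) auto
  finally show ?thesis .
qed

lemma nn_integral_count_space_restrict:
  "(\<integral>\<^sup>+i. g i \<partial>count_space {i\<in>Z. P i}) = (\<integral>\<^sup>+i. (if P i then g i else 0) \<partial>count_space Z)"
  by (auto simp: nn_integral_count_space_indicator intro!: nn_integral_cong split: split_indicator)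

lemma nn_integral_count_space_mono_set:
  "A \<subseteq> B \<Longrightarrow> (\<integral>\<^sup>+i. g i \<partial>count_space A) \<le> (\<integral>\<^sup>+i. g i \<partial>count_space B)"
  by (auto simp: nn_integral_count_space_indicator intro!: nn_integral_mono split: split_indicator)

lemma nn_integral_geometric_nat: assumes "0 \<le> c" "c < 1"
  shows "(\<integral>\<^sup>+m. ennreal (c ^ m) \<partial>count_space (UNIV::nat set)) = ennreal (1 / (1 - c))"
  using assms by (simp add: nn_integral_count_space_nat suminf_ennreal2 summable_geometric suminf_geometric)

lemma nn_integral_geometric_int_ge: assumes "0 \<le> c" "c < 1"
  shows "(\<integral>\<^sup>+j. ennreal (c ^ nat (j - k)) \<partial>count_space {j::int. k \<le> j}) = ennreal (1 / (1 - c))"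
proof -
  have "bij_betw (\<lambda>m::nat. k + int m) UNIV {j. k \<le> j}"
    by (rule bij_betwI[where g="\<lambda>j. nat (j - k)"]) auto
  from nn_integral_bij_count_space[OF this, of "\<lambda>j. ennreal (c ^ nat (j - k))"]
  show ?thesis using nn_integral_geometric_nat[OF assms] by simp
qed

lemma nn_integral_geometric_int_le: assumes "0 \<le> c" "c < 1"
  shows "(\<integral>\<^sup>+j. ennreal (c ^ nat (k - j)) \<partial>count_space {j::int. j \<le> k}) = ennreal (1 / (1 - c))"
proof -
  have "bij_betw (\<lambda>m::nat. k - int m) UNIV {j. j \<le> k}"
    by (rule bij_betwI[where g="\<lambda>j. nat (k - j)"]) auto
  from nn_integral_bij_count_space[OF this, of "\<lambda>j. ennreal (c ^ nat (k - j))"]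
  show ?thesis using nn_integral_geometric_nat[OF assms] by simp
qed

lemma two_powi_mult_power: "k \<le> i \<Longrightarrow> (2::real) powi k * 2 ^ nat (i - k) = 2 powi i"
  by (metis le_add_diff_inverse nat_0_le power_int_add power_int_of_nat diff_ge_0_iff_ge zero_neq_numeral)

lemma two_powi_eq_double: "ennreal (2 powi k) = 2 * ennreal (2 powi (k - 1))"
proof -
  have "(2::real) powi k = 2 powi (k - 1) * 2 powi 1" using power_int_add[of "2::real" "k - 1" 1] by simp
  then show ?thesis by (simp add: ennreal_mult'' mult_ac)
qed

text \<open>Each term satisfies a j <= T^(1/p) d^(j-k) with d = (1/\<rho>)^(1/p), where T is the weighted
  sum on the right; summing this geometric bound replaces Hoelder's inequality, which is not
  available for p < 1.\<close>
lemma tail_sum_powr_le: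
  fixes a :: "int \<Rightarrow> ennreal"
  assumes p: "0 < p" and \<rho>: "1 < \<rho>"
  shows "(\<integral>\<^sup>+j. a j \<partial>count_space {j\<in>Z. k \<le> j}) powe p
    \<le> (\<integral>\<^sup>+j. a j powe p * ennreal (\<rho> ^ nat (j - k)) \<partial>count_space {j\<in>Z. k \<le> j})
        * ennreal ((1 / (1 - (1/\<rho>) powr (1/p))) powr p)"
proof -
  define T where "T = (\<integral>\<^sup>+j. a j powe p * ennreal (\<rho> ^ nat (j - k)) \<partial>count_space {j\<in>Z. k \<le> j})"
  define d where "d = (1/\<rho>) powr (1/p)"
  have d: "0 \<le> d" "d < 1" using p \<rho> powr_less_mono2[of "1/p" "1/\<rho>" 1] unfolding d_def by auto
  have a_le: "a j \<le> T powe (1/p) * ennreal (d ^ nat (j - k))" if j: "j \<in> {j\<in>Z. k \<le> j}" for j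
  proof -
    let ?n = "nat (j - k)"
    have "a j powe p * ennreal (\<rho> ^ ?n) \<le> T"
      unfolding T_def by (rule nn_integral_ge_point[OF j])
    then have "a j powe p * ennreal (\<rho> ^ ?n) * ennreal ((1/\<rho>) ^ ?n) \<le> T * ennreal ((1/\<rho>) ^ ?n)"
      by (rule mult_right_mono) simp
    moreover have "ennreal (\<rho> ^ ?n) * ennreal ((1/\<rho>) ^ ?n) = 1"
      using \<rho> by (simp add: ennreal_mult''[symmetric] power_mult_distrib[symmetric])
    ultimately have "a j powe p \<le> T * ennreal ((1/\<rho>) ^ ?n)"
      by (simp add: mult.assoc)
    then have "a j \<le> (T * ennreal ((1/\<rho>) ^ ?n)) powe (1/p)"
      using p by (rule le_enn_powr_inverse)
    also have "\<dots> = T powe (1/p) * ennreal (d ^ ?n)"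
    proof -
      have "((1/\<rho>) ^ ?n) powr (1/p) = d ^ ?n"
        using \<rho> unfolding d_def by (simp add: powr_realpow[symmetric] powr_powr powr_power mult_ac)
      then show ?thesis using p \<rho> by (simp add: enn_powr_mult enn_powr_ennreal)
    qed
    finally show ?thesis .
  qed
  have "(\<integral>\<^sup>+j. a j \<partial>count_space {j\<in>Z. k \<le> j})
      \<le> (\<integral>\<^sup>+j. T powe (1/p) * ennreal (d ^ nat (j - k)) \<partial>count_space {j\<in>Z. k \<le> j})"
    using a_le by (intro nn_integral_mono) auto
  also have "\<dots> \<le> (\<integral>\<^sup>+j. T powe (1/p) * ennreal (d ^ nat (j - k)) \<partial>count_space {j. k \<le> j})"
    by (intro nn_integral_count_space_mono_set) auto
  also have "\<dots> = T powe (1/p) * ennreal (1 / (1 - d))"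
    using d by (simp add: nn_integral_cmult nn_integral_geometric_int_ge)
  finally have "(\<integral>\<^sup>+j. a j \<partial>count_space {j\<in>Z. k \<le> j}) powe p \<le> (T powe (1/p) * ennreal (1 / (1 - d))) powe p"
    using p by (intro enn_powr_mono) auto
  also have "\<dots> = T * ennreal ((1 / (1 - d)) powr p)"
    using p d by (simp add: enn_powr_mult enn_powr_powr enn_powr_ennreal)
  finally show ?thesis unfolding T_def d_def .
qed

lemma weighted_tail_geometric_le:
  fixes c :: "int \<Rightarrow> ennreal"
  assumes \<rho>: "0 \<le> \<rho>" "\<rho> < 2"
  shows "(\<integral>\<^sup>+k. ennreal (2 powi k) * (\<integral>\<^sup>+j. c j * ennreal (\<rho> ^ nat (j - k)) \<partial>count_space {j\<in>Z. k \<le> j}) \<partial>count_space Z)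
    \<le> ennreal (1 / (1 - \<rho>/2)) * (\<integral>\<^sup>+j. ennreal (2 powi j) * c j \<partial>count_space Z)"
proof -
  define T where "T j k = (if k \<le> j then ennreal (2 powi k) * (c j * ennreal (\<rho> ^ nat (j - k))) else 0)" for j k
  have T_eq: "T j k = ennreal (2 powi j) * c j * ennreal ((\<rho>/2) ^ nat (j - k))" if "k \<le> j" for j k
  proof -
    have "2 powi j * (\<rho>/2) ^ nat (j - k) = 2 powi k * 2 ^ nat (j - k) * (\<rho>/2) ^ nat (j - k)"
      using two_powi_mult_power[OF that] by simp
    also have "\<dots> = 2 powi k * \<rho> ^ nat (j - k)"
      by (simp add: power_mult_distrib[symmetric])
    finally show ?thesis using \<rho> that unfolding T_def
      by (simp add: ennreal_mult''[symmetric] mult_ac)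
  qed
  have "(\<integral>\<^sup>+k. ennreal (2 powi k) * (\<integral>\<^sup>+j. c j * ennreal (\<rho> ^ nat (j - k)) \<partial>count_space {j\<in>Z. k \<le> j}) \<partial>count_space Z)
      = (\<integral>\<^sup>+k. (\<integral>\<^sup>+j. T j k \<partial>count_space Z) \<partial>count_space Z)"
    unfolding T_def nn_integral_count_space_restrict
    by (auto simp: nn_integral_cmult[symmetric] intro!: nn_integral_cong)
  also have "\<dots> = (\<integral>\<^sup>+j. (\<integral>\<^sup>+k. T j k \<partial>count_space Z) \<partial>count_space Z)"
    by (subst nn_integral_count_space_nn_integral) auto
  also have "\<dots> \<le> (\<integral>\<^sup>+j. ennreal (1 / (1 - \<rho>/2)) * (ennreal (2 powi j) * c j) \<partial>count_space Z)"
  proof (intro nn_integral_mono)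
    fix j
    have "(\<integral>\<^sup>+k. T j k \<partial>count_space Z)
       = (\<integral>\<^sup>+k. ennreal (2 powi j) * c j * ennreal ((\<rho>/2) ^ nat (j - k)) \<partial>count_space {k\<in>Z. k \<le> j})"
      unfolding nn_integral_count_space_restrict using T_eq by (intro nn_integral_cong) (auto simp: T_def)
    also have "\<dots> \<le> (\<integral>\<^sup>+k. ennreal (2 powi j) * c j * ennreal ((\<rho>/2) ^ nat (j - k)) \<partial>count_space {k. k \<le> j})"
      by (intro nn_integral_count_space_mono_set) auto
    also have "\<dots> = ennreal (1 / (1 - \<rho>/2)) * (ennreal (2 powi j) * c j)"
      using \<rho> by (simp add: nn_integral_cmult nn_integral_geometric_int_le mult_ac)
    finally show "(\<integral>\<^sup>+k. T j k \<partial>count_space Z) \<le> ennreal (1 / (1 - \<rho>/2)) * (ennreal (2 powi j) * c j)" .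
  qed
  also have "\<dots> = ennreal (1 / (1 - \<rho>/2)) * (\<integral>\<^sup>+j. ennreal (2 powi j) * c j \<partial>count_space Z)"
    by (rule nn_integral_cmult) simp
  finally show ?thesis .
qed

definition tail_sum_const :: "real \<Rightarrow> real" where
  "tail_sum_const p = (1 / (1 - (1 / sqrt 2) powr (1/p))) powr p * (1 / (1 - sqrt 2 / 2))"

lemma tail_sum_const_pos: "0 < p \<Longrightarrow> 0 < tail_sum_const p"
proof -
  assume p: "0 < p"
  have "(1 / sqrt 2) powr (1/p) < 1" using p powr_less_mono2[of "1/p" "1 / sqrt 2" 1] by simp
  moreover have "sqrt 2 / 2 < (1::real)" using real_sqrt_less_iff[of 2 4] by simp
  ultimately show ?thesis unfolding tail_sum_const_def by (auto intro!: mult_pos_pos divide_pos_pos)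
qed

text \<open>The choice \<rho> = sqrt 2 splits the weight 2^k evenly between the geometric series over j >= k
  and the one over k <= j.\<close>
lemma tail_sum_powr_weighted_le:
  fixes a :: "int \<Rightarrow> ennreal" and Z :: "int set"
  assumes p: "0 < p"
  shows "(\<integral>\<^sup>+k. ennreal (2 powi k) * (\<integral>\<^sup>+j. a j \<partial>count_space {j\<in>Z. k \<le> j}) powe p \<partial>count_space Z)
     \<le> ennreal (tail_sum_const p) * (\<integral>\<^sup>+j. ennreal (2 powi j) * a j powe p \<partial>count_space Z)"
proof -
  define \<rho> :: real where "\<rho> = sqrt 2"
  define C where "C = (1 / (1 - (1/\<rho>) powr (1/p))) powr p"
  have \<rho>: "1 < \<rho>" "\<rho> < 2"
    using real_sqrt_less_iff[of 2 4] by (auto simp: \<rho>_def field_simps)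
  have "(\<integral>\<^sup>+k. ennreal (2 powi k) * (\<integral>\<^sup>+j. a j \<partial>count_space {j\<in>Z. k \<le> j}) powe p \<partial>count_space Z)
      \<le> (\<integral>\<^sup>+k. ennreal (2 powi k) * ((\<integral>\<^sup>+j. a j powe p * ennreal (\<rho> ^ nat (j - k)) \<partial>count_space {j\<in>Z. k \<le> j})
            * ennreal C) \<partial>count_space Z)"
    unfolding C_def using tail_sum_powr_le[OF p \<rho>(1)] by (intro nn_integral_mono mult_left_mono) auto
  also have "\<dots> = ennreal C * (\<integral>\<^sup>+k. ennreal (2 powi k)
      * (\<integral>\<^sup>+j. a j powe p * ennreal (\<rho> ^ nat (j - k)) \<partial>count_space {j\<in>Z. k \<le> j}) \<partial>count_space Z)"
    by (subst nn_integral_cmult[symmetric]) (auto simp: mult_ac)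
  also have "\<dots> \<le> ennreal C * (ennreal (1 / (1 - \<rho>/2)) * (\<integral>\<^sup>+j. ennreal (2 powi j) * a j powe p \<partial>count_space Z))"
    using \<rho> by (intro mult_left_mono weighted_tail_geometric_le) auto
  also have "\<dots> = ennreal (C * (1 / (1 - \<rho>/2))) * (\<integral>\<^sup>+j. ennreal (2 powi j) * a j powe p \<partial>count_space Z)"
    using \<rho> by (subst ennreal_mult) (auto simp: C_def mult.assoc)
  also have "C * (1 / (1 - \<rho>/2)) = tail_sum_const p"
    unfolding tail_sum_const_def C_def \<rho>_def ..
  finally show ?thesis .
qed

definition block :: "(int \<Rightarrow> ereal) \<Rightarrow> int \<Rightarrow> real set" where
  "block x k = {y. x k \<le> ereal y \<and> ereal y < x (k + 1)}"

lemma block_borel [measurable]: "block x k \<in> sets borel"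
  unfolding block_def by measurable

locale covering =
  fixes u :: "real \<Rightarrow> real" and Z :: "int set" and x :: "int \<Rightarrow> ereal"
  assumes weight_u: "is_weight u" and covering_seq: "covering_seq u Z x"
begin

definition U :: "ereal \<Rightarrow> ennreal" where
  "U y = (\<integral>\<^sup>+ t\<in>{t. 0 < t \<and> ereal t < y}. ennreal (u t) \<partial>lborel)"

lemma u_measurable [measurable]: "u \<in> borel_measurable borel"
  using weight_u by (simp add: is_weight_def)

lemma U_mono: "y \<le> z \<Longrightarrow> U y \<le> U z"
  unfolding U_def by (rule nn_set_integral_set_mono) (auto intro: less_le_trans)

lemma U_real: assumes "0 < y" shows "0 < U (ereal y)" "U (ereal y) < top"
proof -
  have "{t. 0 < t \<and> ereal t < ereal y} = {0<..<y}" by auto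
  then show "0 < U (ereal y)" "U (ereal y) < top"
    using weight_u assms unfolding is_weight_def U_def by auto
qed

lemma x_finite: "k \<in> Z \<Longrightarrow> 0 < x k \<and> x k < \<infinity>"
  using covering_seq by (simp add: covering_seq_def)

lemma U_x: "k \<in> Z \<Longrightarrow> U (x k) = ennreal (2 powi k)"
  using covering_seq by (simp add: covering_seq_def U_def)

lemma x_strict_mono: "j \<in> Z \<Longrightarrow> k \<in> Z \<Longrightarrow> j < k \<Longrightarrow> x j < x k"
  using covering_seq by (simp add: covering_seq_def)

lemma Z_cases: "Z = UNIV \<or> (\<exists>M. U \<infinity> < ennreal (2 powi (M + 1)) \<and> Z = {k. k \<le> M} \<and> x (M + 1) = \<infinity>)"
proof -
  have "{t. 0 < t \<and> ereal t < \<infinity>} = {0<..}" by auto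
  then have "U \<infinity> = (\<integral>\<^sup>+ t\<in>{0<..}. ennreal (u t) \<partial>lborel)" unfolding U_def by simp
  then show ?thesis using covering_seq unfolding covering_seq_def by (auto split: if_splits)
qed

lemma Z_down_closed: "k \<in> Z \<Longrightarrow> j \<le> k \<Longrightarrow> j \<in> Z"
  using Z_cases by auto

lemma Z_nonempty: "\<exists>k. k \<in> Z"
  using Z_cases by auto

lemma x_last: assumes "k \<in> Z" "k + 1 \<notin> Z"
  shows "x (k + 1) = \<infinity> \<and> U \<infinity> < ennreal (2 powi (k + 1))"
proof -
  obtain M where M: "U \<infinity> < ennreal (2 powi (M + 1))" "Z = {k. k \<le> M}" "x (M + 1) = \<infinity>"
    using Z_cases assms by auto
  then have "k = M" using assms by auto
  then show ?thesis using M by simp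
qed

lemma x_less_succ: "k \<in> Z \<Longrightarrow> x k < x (k + 1)"
  using x_strict_mono[of k "k + 1"] x_last[of k] x_finite[of k] by (cases "k + 1 \<in> Z") auto

lemma x_succ_le: "j \<in> Z \<Longrightarrow> k \<in> Z \<Longrightarrow> j < k \<Longrightarrow> x (j + 1) \<le> x k"
  using x_strict_mono[of "j + 1" k] Z_down_closed[of k "j + 1"] by (cases "j + 1 = k") auto

lemma block_pos: "k \<in> Z \<Longrightarrow> y \<in> block x k \<Longrightarrow> 0 < y"
  using x_finite[of k] unfolding block_def by (auto dest: less_le_trans)

lemma block_disjoint: "j \<in> Z \<Longrightarrow> k \<in> Z \<Longrightarrow> j \<noteq> k \<Longrightarrow> y \<in> block x j \<Longrightarrow> y \<notin> block x k"
proof (cases "j < k")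
  case True
  then show "j \<in> Z \<Longrightarrow> k \<in> Z \<Longrightarrow> y \<in> block x j \<Longrightarrow> y \<notin> block x k"
    using x_succ_le[of j k] unfolding block_def by auto
next
  case False
  then show "j \<in> Z \<Longrightarrow> k \<in> Z \<Longrightarrow> j \<noteq> k \<Longrightarrow> y \<in> block x j \<Longrightarrow> y \<notin> block x k"
    using x_succ_le[of k j] unfolding block_def by auto
qed

lemma Z_exists_small: assumes "0 < (c::real)" shows "\<exists>k\<in>Z. 2 powi k < c"
proof -
  obtain k where "k \<in> Z" using Z_nonempty by blast
  obtain n :: nat where n: "(1/2::real) ^ n < c" using real_arch_pow_inv[OF assms, of "1/2"] by auto
  have "(2::real) powi min k (- int n) \<le> 2 powi (- int n)" by (intro power_int_increasing) auto
  also have "\<dots> = (1/2) ^ n" by (simp add: power_int_minus power_one_over inverse_eq_divide)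
  finally show ?thesis using n Z_down_closed[OF \<open>k \<in> Z\<close>, of "min k (- int n)"] by force
qed

lemma blocks_cover: assumes "0 < y" shows "\<exists>k\<in>Z. y \<in> block x k"
proof -
  obtain c where c: "U (ereal y) = ennreal c" "0 < c"
    using U_real[OF assms] by (metis enn2real_positive_iff ennreal_enn2real_if less_top not_less_zero)
  have below: "x k \<le> ereal y" if "k \<in> Z" "2 powi k < c" for k
  proof (rule ccontr)
    assume "\<not> x k \<le> ereal y"
    then have "U (ereal y) \<le> U (x k)" by (intro U_mono) simp
    then show False using U_x[OF that(1)] c that(2) by (simp add: ennreal_le_iff)
  qed
  have mass: "2 powi k \<le> c" if "k \<in> Z" "x k \<le> ereal y" for k
    using U_mono[OF that(2)] U_x[OF that(1)] c by (simp add: ennreal_le_iff)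
  obtain k0 where k0: "k0 \<in> Z" "2 powi k0 < c"
    using Z_exists_small c(2) by blast
  obtain m :: nat where m: "c < 2 ^ m" using real_arch_pow[of 2 c] by auto
  define K where "K = {k\<in>Z. x k \<le> ereal y \<and> k0 \<le> k}"
  have "K \<subseteq> {k0..int m}"
  proof
    fix k assume "k \<in> K"
    then have "(2::real) powi k < 2 powi (int m)" using mass[of k] m by (auto simp: K_def power_int_of_nat)
    then have "k < int m" by (rule power_int_le_imp_less_exp[rotated]) auto
    then show "k \<in> {k0..int m}" using \<open>k \<in> K\<close> by (auto simp: K_def)
  qed
  then have "finite K" by (rule finite_subset) simp
  moreover have "k0 \<in> K" using k0 below by (simp add: K_def)
  ultimately have kK: "Max K \<in> K" and k_max: "\<And>k. k \<in> K \<Longrightarrow> k \<le> Max K"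
    using Max_in Max_ge by blast+
  have "ereal y < x (Max K + 1)"
  proof (cases "Max K + 1 \<in> Z")
    case True
    then show ?thesis using k_max[of "Max K + 1"] kK by (force simp: K_def)
  next
    case False
    then show ?thesis using x_last[of "Max K"] kK by (auto simp: K_def)
  qed
  then show ?thesis using kK unfolding block_def K_def by auto
qed

lemma U_succ: assumes "j \<in> Z"
  shows "U (x (j + 1)) = ennreal (2 powi j) + (\<integral>\<^sup>+ t\<in>block x j. ennreal (u t) \<partial>lborel)"
proof -
  have "{t. 0 < t \<and> ereal t < x (j + 1)} = {t. 0 < t \<and> ereal t < x j} \<union> block x j"
    using block_pos[OF assms] x_less_succ[OF assms] unfolding block_def
    by (auto simp: not_le intro: less_trans)
  moreover have "{t. 0 < t \<and> ereal t < x j} \<inter> block x j = {}" unfolding block_def by auto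
  moreover have "{t. 0 < t \<and> ereal t < x j} \<in> sets lborel" by measurable
  ultimately show ?thesis using U_x[OF assms] unfolding U_def
    by (simp add: nn_integral_disjoint_pair)
qed

lemma block_mass_prev: assumes "k \<in> Z"
  shows "(\<integral>\<^sup>+ t\<in>block x (k - 1). ennreal (u t) \<partial>lborel) = ennreal (2 powi (k - 1))"
proof -
  have "ennreal (2 powi (k - 1)) + (\<integral>\<^sup>+ t\<in>block x (k - 1). ennreal (u t) \<partial>lborel)
      = ennreal (2 powi (k - 1)) + ennreal (2 powi (k - 1))"
    using U_succ[of "k - 1"] U_x[OF assms] Z_down_closed[OF assms] two_powi_eq_double[of k]
    by (simp add: mult_2)
  then show ?thesis by (simp add: ennreal_add_left_cancel)
qed

lemma block_mass_le: assumes "k \<in> Z" shows "(\<integral>\<^sup>+ t\<in>block x k. ennreal (u t) \<partial>lborel) \<le> ennreal (2 powi k)"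
proof (cases "k + 1 \<in> Z")
  case True then show ?thesis using block_mass_prev[of "k + 1"] by simp
next
  case False
  have "ennreal (2 powi k) + (\<integral>\<^sup>+ t\<in>block x k. ennreal (u t) \<partial>lborel) = U \<infinity>"
    using U_succ[OF assms] x_last[OF assms False] by simp
  also have "\<dots> < ennreal (2 powi k) + ennreal (2 powi k)"
    using x_last[OF assms False] two_powi_eq_double[of "k + 1"] by (simp add: mult_2)
  finally show ?thesis by (simp add: ennreal_add_left_cancel_less)
qed

definition xr :: "int \<Rightarrow> real" where
  "xr k = real_of_ereal (x k)"

lemma x_eq_xr: "k \<in> Z \<Longrightarrow> x k = ereal (xr k)"
  using x_finite[of k] unfolding xr_def by (cases "x k") auto

lemma xr_pos: "k \<in> Z \<Longrightarrow> 0 < xr k"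
  using x_finite[of k] x_eq_xr[of k] by simp

lemma block_index_ge: assumes "k \<in> Z" "j \<in> Z" "y \<in> block x j" "xr k < y" shows "k \<le> j"
proof (rule ccontr)
  assume "\<not> k \<le> j"
  then have "ereal y < x k"
    using x_succ_le[OF assms(2,1)] assms(3) unfolding block_def by (auto intro: less_le_trans)
  then show False using assms(1,4) x_eq_xr by auto
qed

lemma two_powi_mult_eq_prev_block: assumes "k \<in> Z"
  shows "ennreal (2 powi k) * c = 2 * (\<integral>\<^sup>+ y\<in>block x (k - 1). c * ennreal (u y) \<partial>lborel)"
proof -
  have "(\<integral>\<^sup>+ y\<in>block x (k - 1). c * ennreal (u y) \<partial>lborel)
      = c * (\<integral>\<^sup>+ y\<in>block x (k - 1). ennreal (u y) \<partial>lborel)"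
    by (subst nn_integral_cmult[symmetric]) (auto simp: mult.assoc)
  then show ?thesis using block_mass_prev[OF assms] two_powi_eq_double[of k] by (simp add: mult_ac)
qed

lemma nn_integral_le_sum_blocks:
  assumes [measurable]: "f \<in> borel_measurable borel"
  shows "(\<integral>\<^sup>+ y\<in>{0<..}. f y \<partial>lborel) \<le> (\<integral>\<^sup>+ k. (\<integral>\<^sup>+ y\<in>block x k. f y \<partial>lborel) \<partial>count_space Z)"
proof (rule nn_integral_le_count_space_sum)
  fix y
  show "f y * indicator {0<..} y \<le> (\<integral>\<^sup>+ k. f y * indicator (block x k) y \<partial>count_space Z)"
  proof (cases "0 < y")
    case True
    then obtain k where k: "k \<in> Z" "y \<in> block x k" using blocks_cover by blast
    then have "f y * indicator {0<..} y = f y * indicator (block x k) y" using True by simp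
    also have "\<dots> \<le> (\<integral>\<^sup>+ k. f y * indicator (block x k) y \<partial>count_space Z)"
      by (rule nn_integral_ge_point[OF k(1)])
    finally show ?thesis .
  qed simp
qed auto

lemma nn_integral_tail_le_sum_blocks:
  assumes [measurable]: "f \<in> borel_measurable borel" and k: "k \<in> Z"
  shows "(\<integral>\<^sup>+ y\<in>{xr k<..}. f y \<partial>lborel)
    \<le> (\<integral>\<^sup>+ j. (\<integral>\<^sup>+ y\<in>block x j. f y \<partial>lborel) \<partial>count_space {j\<in>Z. k \<le> j})"
proof (rule nn_integral_le_count_space_sum)
  fix y
  show "f y * indicator {xr k<..} y \<le> (\<integral>\<^sup>+ j. f y * indicator (block x j) y \<partial>count_space {j\<in>Z. k \<le> j})"
  proof (cases "xr k < y")
    case True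
    then obtain j where j: "j \<in> Z" "y \<in> block x j" using blocks_cover[of y] xr_pos[OF k] by auto
    then have j_in: "j \<in> {j\<in>Z. k \<le> j}" using block_index_ge[OF k j True] by simp
    have "f y * indicator {xr k<..} y = f y * indicator (block x j) y" using True j by simp
    also have "\<dots> \<le> (\<integral>\<^sup>+ j. f y * indicator (block x j) y \<partial>count_space {j\<in>Z. k \<le> j})"
      by (rule nn_integral_ge_point[OF j_in])
    finally show ?thesis .
  qed simp
qed auto

lemma nn_integral_sum_prev_blocks_le:
  fixes g :: "int \<Rightarrow> real \<Rightarrow> ennreal"
  assumes [measurable]: "\<And>k. g k \<in> borel_measurable borel"
    and le: "\<And>k y. k \<in> Z \<Longrightarrow> y \<in> block x (k - 1) \<Longrightarrow> g k y \<le> f y"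
  shows "(\<integral>\<^sup>+ k. (\<integral>\<^sup>+ y\<in>block x (k - 1). g k y \<partial>lborel) \<partial>count_space Z) \<le> (\<integral>\<^sup>+ y\<in>{0<..}. f y \<partial>lborel)"
proof (rule nn_integral_count_space_disjoint_le)
  fix y i j assume "i \<in> Z" "j \<in> Z" "i \<noteq> j"
  then have "i - 1 \<in> Z" "j - 1 \<in> Z" "i - 1 \<noteq> j - 1" using Z_down_closed by auto
  then show "g i y * indicator (block x (i - 1)) y = 0 \<or> g j y * indicator (block x (j - 1)) y = 0"
    using block_disjoint by (auto split: split_indicator)
next
  fix y i assume "i \<in> Z"
  then have "i - 1 \<in> Z" using Z_down_closed by auto
  then show "g i y * indicator (block x (i - 1)) y \<le> f y * indicator {0<..} y"
    using le[OF \<open>i \<in> Z\<close>] block_pos by (auto split: split_indicator)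
qed auto

end

locale iterated_hardy = covering +
  fixes w h :: "real \<Rightarrow> real" and q r :: real
  assumes weight_w: "is_weight w" and nonneg_h: "nonneg_meas h" and q: "0 < q" and r: "0 < r"
begin

lemma w_measurable [measurable]: "w \<in> borel_measurable borel"
  using weight_w by (simp add: is_weight_def)

lemma h_measurable [measurable]: "h \<in> borel_measurable borel"
  using nonneg_h by (simp add: nonneg_meas_def)

text \<open>\<open>L\<close>, \<open>B\<close> and \<open>S\<close> below are the \<open>r\<close>-th powers of the three quantities of the theorem,
  and \<open>b k\<close> is the \<open>q\<close>-th power of the inner norm in the \<open>k\<close>-th term of the sequence norm.\<close>

definition p :: real where "p = r / q"

lemma p: "0 < p" using q r by (simp add: p_def)

lemma q_mult_p: "q * p = r" using q by (simp add: p_def)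

definition H :: "real \<Rightarrow> ennreal" where
  "H s = (\<integral>\<^sup>+ \<tau>\<in>{s<..}. ennreal (h \<tau>) \<partial>lborel)"

definition F :: "real \<Rightarrow> ennreal" where
  "F y = (\<integral>\<^sup>+ t\<in>{y<..}. (H t powe q) * ennreal (w t) \<partial>lborel)"

definition W :: "real \<Rightarrow> real \<Rightarrow> ennreal" where
  "W t s = (\<integral>\<^sup>+ \<tau>\<in>{t<..<s}. ennreal (w \<tau>) \<partial>lborel)"

definition G :: "real \<Rightarrow> ennreal" where
  "G t = (SUP s\<in>{t<..}. (W t s powe p) * (H s powe r))"

definition H_loc :: "int \<Rightarrow> real \<Rightarrow> ennreal" where
  "H_loc k s = (\<integral>\<^sup>+ \<tau>\<in>{\<tau>. s < \<tau> \<and> ereal \<tau> < x (k + 1)}. ennreal (h \<tau>) \<partial>lborel)"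

definition H_next :: "int \<Rightarrow> ennreal" where
  "H_next j = (\<integral>\<^sup>+ \<tau>\<in>{\<tau>. x (j + 1) < ereal \<tau>}. ennreal (h \<tau>) \<partial>lborel)"

definition w_block :: "int \<Rightarrow> ennreal" where
  "w_block j = (\<integral>\<^sup>+ t\<in>block x j. ennreal (w t) \<partial>lborel)"

definition a :: "int \<Rightarrow> ennreal" where
  "a j = (\<integral>\<^sup>+ t\<in>block x j. H t powe q * ennreal (w t) \<partial>lborel)"

definition b :: "int \<Rightarrow> ennreal" where
  "b k = (\<integral>\<^sup>+ s\<in>{s. x k < ereal s \<and> ereal s < x (k + 1)}. (H_loc k s powe q) * ennreal (w s) \<partial>lborel)"

definition L :: ennreal where
  "L = (\<integral>\<^sup>+ y\<in>{0<..}. (F y powe p) * ennreal (u y) \<partial>lborel)"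

definition B :: ennreal where
  "B = (\<integral>\<^sup>+ k. (ennreal (2 powr (real_of_int k / r)) * (b k powe (1 / q))) powe r \<partial>count_space Z)"

definition S :: ennreal where
  "S = (\<integral>\<^sup>+ t\<in>{0<..}. ennreal (u t) * G t \<partial>lborel)"

lemma H_antimono: "s \<le> t \<Longrightarrow> H t \<le> H s"
  unfolding H_def by (rule nn_set_integral_set_mono) auto

lemma F_antimono: "s \<le> t \<Longrightarrow> F t \<le> F s"
  unfolding F_def by (rule nn_set_integral_set_mono) auto

lemma H_loc_antimono: "s \<le> t \<Longrightarrow> H_loc k t \<le> H_loc k s"
  unfolding H_loc_def by (rule nn_set_integral_set_mono) auto

lemma H_measurable [measurable]: "H \<in> borel_measurable borel"
  by (rule borel_measurable_antimono_ennreal) (rule H_antimono)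

lemma F_measurable [measurable]: "F \<in> borel_measurable borel"
  by (rule borel_measurable_antimono_ennreal) (rule F_antimono)

lemma H_loc_measurable [measurable]: "H_loc k \<in> borel_measurable borel"
  by (rule borel_measurable_antimono_ennreal) (rule H_loc_antimono)

lemma G_le_F_powr: assumes "0 < t" shows "G t \<le> F t powe p"
  unfolding G_def
proof (rule SUP_least)
  fix s assume s: "s \<in> {t<..}"
  have "W t s * H s powe q = (\<integral>\<^sup>+ \<tau>\<in>{t<..<s}. ennreal (w \<tau>) * H s powe q \<partial>lborel)"
    unfolding W_def by (subst nn_integral_multc[symmetric]) (auto simp: mult_ac)
  also have "\<dots> \<le> (\<integral>\<^sup>+ \<tau>\<in>{t<..<s}. H \<tau> powe q * ennreal (w \<tau>) \<partial>lborel)"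
    by (intro nn_integral_mono) (auto split: split_indicator simp: mult_ac intro!: mult_left_mono enn_powr_mono H_antimono q)
  also have "\<dots> \<le> F t" unfolding F_def by (rule nn_set_integral_set_mono) auto
  finally have "(W t s * H s powe q) powe p \<le> F t powe p" by (rule enn_powr_mono) (rule p)
  moreover have "(W t s * H s powe q) powe p = W t s powe p * H s powe r"
    using p q by (simp add: enn_powr_mult enn_powr_powr q_mult_p)
  ultimately show "W t s powe p * H s powe r \<le> F t powe p" by simp
qed

lemma S_le_L: "S \<le> L"
  unfolding S_def L_def
  by (intro nn_integral_mono) (auto split: split_indicator simp: mult_ac intro!: mult_left_mono G_le_F_powr)

lemma B_summand_eq: "(ennreal (2 powr (real_of_int k / r)) * (c powe (1 / q))) powe r = ennreal (2 powi k) * c powe p"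
proof -
  have "(ennreal (2 powr (real_of_int k / r)) * (c powe (1 / q))) powe r
      = ennreal (2 powr (real_of_int k / r)) powe r * (c powe (1 / q)) powe r"
    using r by (simp add: enn_powr_mult)
  also have "ennreal (2 powr (real_of_int k / r)) powe r = ennreal (2 powi k)"
    using r by (simp add: enn_powr_ennreal powr_powr powr_real_of_int')
  also have "(c powe (1 / q)) powe r = c powe p"
    using r q by (simp add: enn_powr_powr p_def)
  finally show ?thesis .
qed

lemma B_eq: "B = (\<integral>\<^sup>+ k. ennreal (2 powi k) * b k powe p \<partial>count_space Z)"
  unfolding B_def B_summand_eq ..

lemma b_le_F: assumes "k \<in> Z" shows "b k \<le> F (xr k)"
proof -
  have "b k \<le> (\<integral>\<^sup>+ s\<in>{s. x k < ereal s \<and> ereal s < x (k + 1)}. (H s powe q) * ennreal (w s) \<partial>lborel)"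
    unfolding b_def
    by (intro nn_integral_mono) (auto split: split_indicator intro!: mult_right_mono enn_powr_mono q
         simp: H_loc_def H_def intro: nn_set_integral_set_mono)
  also have "\<dots> \<le> F (xr k)" unfolding F_def using x_eq_xr[OF assms] by (intro nn_set_integral_set_mono) auto
  finally show ?thesis .
qed

lemma B_le_2L: "B \<le> 2 * L"
proof -
  have "B \<le> (\<integral>\<^sup>+ k. 2 * (\<integral>\<^sup>+ y\<in>block x (k - 1). F (xr k) powe p * ennreal (u y) \<partial>lborel) \<partial>count_space Z)"
    unfolding B_eq using b_le_F p
    by (intro nn_integral_mono) (auto simp flip: two_powi_mult_eq_prev_block intro!: mult_left_mono enn_powr_mono)
  also have "\<dots> = 2 * (\<integral>\<^sup>+ k. (\<integral>\<^sup>+ y\<in>block x (k - 1). F (xr k) powe p * ennreal (u y) \<partial>lborel) \<partial>count_space Z)"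
    by (rule nn_integral_cmult) simp
  also have "\<dots> \<le> 2 * L"
    unfolding L_def
  proof (intro mult_left_mono nn_integral_sum_prev_blocks_le)
    fix k y assume "k \<in> Z" "y \<in> block x (k - 1)"
    then have "y \<le> xr k" using x_eq_xr[of k] unfolding block_def by auto
    then show "F (xr k) powe p * ennreal (u y) \<le> F y powe p * ennreal (u y)"
      by (auto intro!: mult_right_mono enn_powr_mono p F_antimono)
  qed auto
  finally show ?thesis .
qed

lemma block_integral_le: assumes "k \<in> Z"
  shows "(\<integral>\<^sup>+ y\<in>block x k. F y powe p * ennreal (u y) \<partial>lborel) \<le> ennreal (2 powi k) * F (xr k) powe p"
proof -
  have "(\<integral>\<^sup>+ y\<in>block x k. F y powe p * ennreal (u y) \<partial>lborel)
     \<le> (\<integral>\<^sup>+ y. F (xr k) powe p * (ennreal (u y) * indicator (block x k) y) \<partial>lborel)"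
  proof (intro nn_integral_mono)
    fix y
    show "F y powe p * ennreal (u y) * indicator (block x k) y \<le> F (xr k) powe p * (ennreal (u y) * indicator (block x k) y)"
    proof (cases "y \<in> block x k")
      case True
      then have "xr k \<le> y" using x_eq_xr[OF assms] unfolding block_def by auto
      then show ?thesis using True by (auto intro!: mult_right_mono enn_powr_mono p F_antimono)
    qed simp
  qed
  also have "\<dots> = F (xr k) powe p * (\<integral>\<^sup>+ y\<in>block x k. ennreal (u y) \<partial>lborel)"
    by (subst nn_integral_cmult) auto
  also have "\<dots> \<le> F (xr k) powe p * ennreal (2 powi k)"
    by (intro mult_left_mono block_mass_le assms) auto
  finally show ?thesis by (simp add: mult_ac)
qed

lemma L_le_weighted_tail_sum:
  "L \<le> (\<integral>\<^sup>+ k. ennreal (2 powi k) * (\<integral>\<^sup>+j. a j \<partial>count_space {j\<in>Z. k \<le> j}) powe p \<partial>count_space Z)"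
proof -
  have "L \<le> (\<integral>\<^sup>+ k. (\<integral>\<^sup>+ y\<in>block x k. F y powe p * ennreal (u y) \<partial>lborel) \<partial>count_space Z)"
    unfolding L_def by (rule nn_integral_le_sum_blocks) simp
  also have "\<dots> \<le> (\<integral>\<^sup>+ k. ennreal (2 powi k) * (\<integral>\<^sup>+j. a j \<partial>count_space {j\<in>Z. k \<le> j}) powe p \<partial>count_space Z)"
  proof (intro nn_integral_mono)
    fix k assume "k \<in> space (count_space Z)"
    then have k: "k \<in> Z" by simp
    have "F (xr k) \<le> (\<integral>\<^sup>+j. a j \<partial>count_space {j\<in>Z. k \<le> j})"
      unfolding F_def a_def by (rule nn_integral_tail_le_sum_blocks[OF _ k]) simp
    then have "ennreal (2 powi k) * F (xr k) powe p
        \<le> ennreal (2 powi k) * (\<integral>\<^sup>+j. a j \<partial>count_space {j\<in>Z. k \<le> j}) powe p"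
      using p by (intro mult_left_mono enn_powr_mono) auto
    with block_integral_le[OF k]
    show "(\<integral>\<^sup>+ y\<in>block x k. F y powe p * ennreal (u y) \<partial>lborel)
        \<le> ennreal (2 powi k) * (\<integral>\<^sup>+j. a j \<partial>count_space {j\<in>Z. k \<le> j}) powe p"
      by (rule order_trans)
  qed
  finally show ?thesis .
qed

lemma H_le_H_loc_add: assumes "j \<in> Z" "s \<in> block x j" shows "H s \<le> H_loc j s + H_next j"
proof -
  have "H s \<le> (\<integral>\<^sup>+ \<tau>. ennreal (h \<tau>) * indicator {\<tau>. s < \<tau> \<and> ereal \<tau> < x (j + 1)} \<tau>
                   + ennreal (h \<tau>) * indicator {\<tau>. x (j + 1) < ereal \<tau>} \<tau> \<partial>lborel)"
    unfolding H_def
  proof (rule nn_integral_mono_AE)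
    show "AE \<tau> in lborel. ennreal (h \<tau>) * indicator {s<..} \<tau> \<le> ennreal (h \<tau>) * indicator {\<tau>. s < \<tau> \<and> ereal \<tau> < x (j + 1)} \<tau>
                   + ennreal (h \<tau>) * indicator {\<tau>. x (j + 1) < ereal \<tau>} \<tau>"
      using AE_lborel_singleton[of "real_of_ereal (x (j+1))"]
    proof (rule eventually_mono)
      fix \<tau> :: real assume ne: "\<tau> \<noteq> real_of_ereal (x (j + 1))"
      show "ennreal (h \<tau>) * indicator {s<..} \<tau> \<le> ennreal (h \<tau>) * indicator {\<tau>. s < \<tau> \<and> ereal \<tau> < x (j + 1)} \<tau>
                   + ennreal (h \<tau>) * indicator {\<tau>. x (j + 1) < ereal \<tau>} \<tau>"
      proof (cases "s < \<tau>")
        case True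
        have "ereal \<tau> \<noteq> x (j+1)" using ne by (metis real_of_ereal.simps(1))
        then have "ereal \<tau> < x (j + 1) \<or> x (j + 1) < ereal \<tau>" by auto
        then show ?thesis using True by (auto split: split_indicator)
      qed simp
    qed
  qed
  also have "\<dots> = H_loc j s + H_next j" unfolding H_loc_def H_next_def by (subst nn_integral_add) auto
  finally show ?thesis .
qed

lemma b_eq_block: "b j = (\<integral>\<^sup>+ s\<in>block x j. (H_loc j s powe q) * ennreal (w s) \<partial>lborel)" if "j \<in> Z"
  unfolding b_def
proof (rule nn_integral_cong_AE)
  show "AE s in lborel. H_loc j s powe q * ennreal (w s) * indicator {s. x j < ereal s \<and> ereal s < x (j + 1)} s =
             H_loc j s powe q * ennreal (w s) * indicator (block x j) s"
    using AE_lborel_singleton[of "xr j"]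
  proof (rule eventually_mono)
    fix s assume "s \<noteq> xr j"
    then have "x j < ereal s \<longleftrightarrow> x j \<le> ereal s" using x_eq_xr[OF that] by auto
    then show "H_loc j s powe q * ennreal (w s) * indicator {s. x j < ereal s \<and> ereal s < x (j + 1)} s =
             H_loc j s powe q * ennreal (w s) * indicator (block x j) s"
      unfolding block_def by (auto split: split_indicator)
  qed
qed

lemma a_le: assumes "j \<in> Z" shows "a j \<le> 2 powe q * (b j + H_next j powe q * w_block j)"
proof -
  have "a j \<le> (\<integral>\<^sup>+ t. 2 powe q * (H_loc j t powe q * ennreal (w t) * indicator (block x j) t)
                      + 2 powe q * H_next j powe q * (ennreal (w t) * indicator (block x j) t) \<partial>lborel)"
    unfolding a_def
  proof (intro nn_integral_mono)
    fix t
    show "H t powe q * ennreal (w t) * indicator (block x j) t \<le> 2 powe q * (H_loc j t powe q * ennreal (w t) * indicator (block x j) t)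
                      + 2 powe q * H_next j powe q * (ennreal (w t) * indicator (block x j) t)"
    proof (cases "t \<in> block x j")
      case True
      have "H t powe q \<le> (H_loc j t + H_next j) powe q" using H_le_H_loc_add[OF assms True] q by (rule enn_powr_mono)
      also have "\<dots> \<le> 2 powe q * (H_loc j t powe q + H_next j powe q)" using q by (rule enn_powr_add_le)
      finally have "H t powe q * ennreal (w t) \<le> 2 powe q * (H_loc j t powe q + H_next j powe q) * ennreal (w t)"
        by (rule mult_right_mono) simp
      then show ?thesis using True by (simp add: distrib_left distrib_right mult_ac)
    qed simp
  qed
  also have "\<dots> = 2 powe q * b j + 2 powe q * H_next j powe q * w_block j"
    unfolding b_eq_block[OF assms] w_block_def
    by (subst nn_integral_add) (auto simp: nn_integral_cmult)
  finally show ?thesis by (simp add: distrib_left mult_ac)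
qed

lemma a_powr_le: assumes "j \<in> Z" shows "a j powe p \<le> 2 powe r * (2 powe p * (b j powe p + H_next j powe r * w_block j powe p))"
proof -
  have "a j powe p \<le> (2 powe q * (b j + H_next j powe q * w_block j)) powe p"
    using a_le[OF assms] p by (rule enn_powr_mono)
  also have "\<dots> = 2 powe r * (b j + H_next j powe q * w_block j) powe p"
    using p q by (simp add: enn_powr_mult enn_powr_powr q_mult_p)
  also have "\<dots> \<le> 2 powe r * (2 powe p * (b j powe p + (H_next j powe q * w_block j) powe p))"
    by (intro mult_left_mono enn_powr_add_le p) simp
  also have "(H_next j powe q * w_block j) powe p = H_next j powe r * w_block j powe p"
    using p q by (simp add: enn_powr_mult enn_powr_powr q_mult_p)
  finally show ?thesis .
qed

lemma H_next_w_block_le_G: assumes j: "j \<in> Z" and t: "t \<in> block x (j - 1)"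
  shows "H_next j powe r * w_block j powe p \<le> G t"
proof (cases "j + 1 \<in> Z")
  case False
  then have "H_next j = 0" using x_last[OF j] unfolding H_next_def by simp
  then show ?thesis using r by simp
next
  case True
  define s where "s = xr (j+1)"
  have xs: "x (j+1) = ereal s" using x_eq_xr[OF True] by (simp add: s_def)
  have tj: "ereal t < x j" using t unfolding block_def by simp
  have "x j < x (j+1)" by (rule x_less_succ[OF j])
  then have "ereal t < ereal s" using tj xs by (metis less_trans)
  then have ts: "s \<in> {t<..}" by simp
  have "w_block j \<le> W t s" unfolding w_block_def W_def
  proof (rule nn_set_integral_set_mono, rule subsetI)
    fix y assume "y \<in> block x j"
    then have "x j \<le> ereal y" "ereal y < ereal s" using xs unfolding block_def by auto
    moreover have "ereal t < ereal y" using tj \<open>x j \<le> ereal y\<close> by (rule less_le_trans)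
    ultimately show "y \<in> {t<..<s}" by simp
  qed
  moreover have "H_next j = H s" unfolding H_next_def H_def using xs by (simp add: greaterThan_def)
  ultimately have "H_next j powe r * w_block j powe p \<le> W t s powe p * H s powe r"
    using p r by (auto simp: mult.commute intro!: mult_left_mono enn_powr_mono)
  also have "\<dots> \<le> G t" unfolding G_def using ts by (rule SUP_upper)
  finally show ?thesis .
qed

lemma sum_H_next_w_block_le_S:
  "(\<integral>\<^sup>+ j. ennreal (2 powi j) * (H_next j powe r * w_block j powe p) \<partial>count_space Z) \<le> 2 * S"
proof -
  have "(\<integral>\<^sup>+ j. ennreal (2 powi j) * (H_next j powe r * w_block j powe p) \<partial>count_space Z)
      = 2 * (\<integral>\<^sup>+ j. (\<integral>\<^sup>+ y\<in>block x (j - 1). H_next j powe r * w_block j powe p * ennreal (u y) \<partial>lborel)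
               \<partial>count_space Z)"
    by (subst nn_integral_cmult[symmetric]) (auto intro!: nn_integral_cong simp: two_powi_mult_eq_prev_block)
  also have "\<dots> \<le> 2 * S"
    unfolding S_def
  proof (intro mult_left_mono nn_integral_sum_prev_blocks_le)
    fix j y assume "j \<in> Z" "y \<in> block x (j - 1)"
    then show "H_next j powe r * w_block j powe p * ennreal (u y) \<le> ennreal (u y) * G y"
      by (auto simp: mult.commute intro!: mult_left_mono H_next_w_block_le_G)
  qed auto
  finally show ?thesis .
qed

lemma weighted_a_sum_le: "(\<integral>\<^sup>+j. ennreal (2 powi j) * a j powe p \<partial>count_space Z) \<le> 2 powe r * 2 powe p * (B + 2 * S)"
proof -
  have "(\<integral>\<^sup>+j. ennreal (2 powi j) * a j powe p \<partial>count_space Z)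
      \<le> (\<integral>\<^sup>+j. 2 powe r * 2 powe p * (ennreal (2 powi j) * b j powe p
             + ennreal (2 powi j) * (H_next j powe r * w_block j powe p)) \<partial>count_space Z)"
  proof (intro nn_integral_mono)
    fix j assume "j \<in> space (count_space Z)"
    then have "ennreal (2 powi j) * a j powe p
        \<le> ennreal (2 powi j) * (2 powe r * (2 powe p * (b j powe p + H_next j powe r * w_block j powe p)))"
      by (intro mult_left_mono a_powr_le) auto
    then show "ennreal (2 powi j) * a j powe p \<le> 2 powe r * 2 powe p * (ennreal (2 powi j) * b j powe p
             + ennreal (2 powi j) * (H_next j powe r * w_block j powe p))"
      by (simp add: distrib_left mult_ac)
  qed
  also have "\<dots> = 2 powe r * 2 powe p * (B + (\<integral>\<^sup>+ j. ennreal (2 powi j) * (H_next j powe r * w_block j powe p) \<partial>count_space Z))"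
    unfolding B_eq by (simp add: nn_integral_cmult nn_integral_add)
  also have "\<dots> \<le> 2 powe r * 2 powe p * (B + 2 * S)"
    by (intro mult_left_mono add_left_mono sum_H_next_w_block_le_S) simp
  finally show ?thesis .
qed

lemma L_le_B_S: "L \<le> ennreal (tail_sum_const p * 2 powr r * 2 powr p * 2) * (B + S)"
proof -
  have "L \<le> ennreal (tail_sum_const p) * (\<integral>\<^sup>+j. ennreal (2 powi j) * a j powe p \<partial>count_space Z)"
    using L_le_weighted_tail_sum tail_sum_powr_weighted_le[OF p] by (rule order_trans)
  also have "\<dots> \<le> ennreal (tail_sum_const p) * (2 powe r * 2 powe p * (B + 2 * S))"
    by (intro mult_left_mono weighted_a_sum_le) simp
  also have "\<dots> \<le> ennreal (tail_sum_const p) * (2 powe r * 2 powe p * (2 * (B + S)))"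
    by (intro mult_left_mono) (auto simp: distrib_left mult_2 add_mono add.assoc)
  also have "\<dots> = ennreal (tail_sum_const p * 2 powr r * 2 powr p * 2) * (B + S)"
    using tail_sum_const_pos[OF p] by (simp add: enn_powr_numeral ennreal_mult mult_ac distrib_left)
  finally show ?thesis .
qed

end

definition equiv_const :: "real \<Rightarrow> real \<Rightarrow> real" where
  "equiv_const c r = max (c powr (1/r) * 2 powr (1/r)) (2 powr (1/r) + 1)"

lemma equiv_const_pos: "0 < equiv_const c r"
  unfolding equiv_const_def by (simp add: max.strict_coboundedI2 add_pos_pos)

lemma enn_powr_two_sided_bound:
  fixes L B S :: ennreal
  assumes r: "0 < r" and "0 \<le> c" and upper: "L \<le> ennreal c * (B + S)" and "B \<le> 2 * L" "S \<le> L"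
  shows "L powe (1/r) \<le> ennreal (equiv_const c r) * (B powe (1/r) + S powe (1/r))"
    and "B powe (1/r) + S powe (1/r) \<le> ennreal (equiv_const c r) * L powe (1/r)"
proof -
  have r': "0 < 1/r" using r by simp
  have "L powe (1/r) \<le> (ennreal c * (B + S)) powe (1/r)"
    using upper r' by (rule enn_powr_mono)
  also have "\<dots> \<le> ennreal (c powr (1/r)) * (2 powe (1/r) * (B powe (1/r) + S powe (1/r)))"
    using r' \<open>0 \<le> c\<close> by (simp add: enn_powr_mult enn_powr_ennreal mult_left_mono enn_powr_add_le)
  also have "\<dots> \<le> ennreal (equiv_const c r) * (B powe (1/r) + S powe (1/r))"
    unfolding equiv_const_def enn_powr_numeral
    by (simp add: mult.assoc[symmetric] ennreal_mult[symmetric] mult_right_mono ennreal_leI)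
  finally show "L powe (1/r) \<le> ennreal (equiv_const c r) * (B powe (1/r) + S powe (1/r))" .
  have "B powe (1/r) + S powe (1/r) \<le> (2 * L) powe (1/r) + L powe (1/r)"
    using assms r' by (intro add_mono enn_powr_mono) auto
  also have "\<dots> = ennreal (2 powr (1/r) + 1) * L powe (1/r)"
    using r' by (simp add: enn_powr_mult enn_powr_numeral distrib_right ennreal_plus)
  also have "\<dots> \<le> ennreal (equiv_const c r) * L powe (1/r)"
    unfolding equiv_const_def by (intro mult_right_mono ennreal_leI) auto
  finally show "B powe (1/r) + S powe (1/r) \<le> ennreal (equiv_const c r) * L powe (1/r)" .
qed

theorem lemma4p4:
  fixes q r :: real
  assumes "0 < q" and "0 < r"
  shows "\<exists>C>0. \<forall>u v w Z x h.
     is_weight u \<and> is_weight v \<and> is_weight w \<and> covering_seq u Z x \<and> nonneg_meas h \<longrightarrow>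
     (let
        LHS = (\<integral>\<^sup>+ y\<in>{0<..}.
                 ((\<integral>\<^sup>+ t\<in>{y<..}. ((\<integral>\<^sup>+ s\<in>{t<..}. ennreal (h s) \<partial>lborel) powe q) * ennreal (w t) \<partial>lborel) powe (r / q))
                 * ennreal (u y) \<partial>lborel) powe (1 / r);
        B = (\<integral>\<^sup>+ k. (ennreal (2 powr (real_of_int k / r)) *
                 ((\<integral>\<^sup>+ s\<in>{s. x k < ereal s \<and> ereal s < x (k + 1)}.
                     ((\<integral>\<^sup>+ \<tau>\<in>{\<tau>. s < \<tau> \<and> ereal \<tau> < x (k + 1)}. ennreal (h \<tau>) \<partial>lborel) powe q) * ennreal (w s) \<partial>lborel)
                   powe (1 / q))) powe r \<partial>count_space Z) powe (1 / r);
        S = (\<integral>\<^sup>+ t\<in>{0<..}. ennreal (u t) *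
                 (SUP s\<in>{t<..}. ((\<integral>\<^sup>+ \<tau>\<in>{t<..<s}. ennreal (w \<tau>) \<partial>lborel) powe (r / q)) *
                                 ((\<integral>\<^sup>+ \<tau>\<in>{s<..}. ennreal (h \<tau>) \<partial>lborel) powe r)) \<partial>lborel) powe (1 / r)
      in LHS \<le> ennreal C * (B + S) \<and> B + S \<le> ennreal C * LHS)"
  apply (intro exI[of _ "equiv_const (tail_sum_const (r/q) * 2 powr r * 2 powr (r/q) * 2) r"] conjI allI impI)
  subgoal by (rule equiv_const_pos)
  subgoal for u v w Z x h
  proof -
    assume "is_weight u \<and> is_weight v \<and> is_weight w \<and> covering_seq u Z x \<and> nonneg_meas h"
    then interpret iterated_hardy u Z x w h q r
      using assms by unfold_locales auto
    have "0 \<le> tail_sum_const p * 2 powr r * 2 powr p * 2"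
      using tail_sum_const_pos[OF p] by simp
    from enn_powr_two_sided_bound[OF r this L_le_B_S B_le_2L S_le_L]
    show ?thesis unfolding Let_def L_def F_def H_def B_def b_def H_loc_def S_def G_def W_def p_def by simp
  qed
  done

end
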